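(* Let $m\mathcal{M}$ be the maximal matching feature. Then for every weighted graph $(G,f)$ one has $\sigma^{m\mathcal{M}}_{(G,f)}=\varrho^{m\mathcal{M}}_{(G,f)}$, and the generator $\sigma^{m\mathcal{M}}=\varrho^{m\mathcal{M}}$ is balanced: for every graph $G=(V,E)$, every two filtering functions $f,g:E\to\mathbb{R}$ and every $h>0$ with $\sup_{e\in E}|f(e)-g(e)|\le h$, $\sigma^{m\mathcal{M}}_{(G,f)}(u-h,v+h)\le\sigma^{m\mathcal{M}}_{(G,g)}(u,v)$ for all $(u,v)\in\Delta^+$.
   Context: Graphs are finite simple undirected graphs; a weighted graph is $(G,f)$ with $G=(V,E)$, $f:E\to\mathbb{R}$. For $u\in\mathbb{R}$, $G_u=(V_u,E_u)$ is the subgraph induced by the edge set $f^{-1}((-\infty,u])$ (vertices: endpoints of these edges), $G_{+\infty}=G$. $\Delta^+=\{(u,v)\in\mathbb{R}\times(\mathbb{R}\cup\{+\infty\}):u<v\}$, with $+\infty+h=+\infty$. A feature assigns to every graph $H=(V_H,E_H)$ a function $2^{V_H\cup E_H}\to\{true,false\}$. The matching feature $\mathcal{M}$ is true on $X$ iff $X$ is a set of edges of $H$ no two of which share a vertex. The maximal feature $m\mathcal{F}$ of a feature $\mathcal{F}$ is: $m\mathcal{F}(X)=true$ in $H$ iff $\mathcal{F}(X)=true$ in $H$ and there is no $Y\subseteq V_H\cup E_H$ with $X\subsetneq Y$ and $\mathcal{F}(Y)=true$. Thus $m\mathcal{M}$ is true exactly on maximal matchings. For a feature $\mathcal{F}$: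 $X\subseteq V\cup E$ is an $\mathcal{F}$-set at level $w$ if $X\subseteq V_w\cup E_w$ and $\mathcal{F}(X)=true$ in $G_w$; a steady $\mathcal{F}$-set at $(u,v)\in\Delta^+$ if it is an $\mathcal{F}$-set at all levels $w\in[u,v]$; a ranging $\mathcal{F}$-set at $(u,v)$ if it is an $\mathcal{F}$-set at some level $w\le u$ and at some level $w'\ge v$. $\sigma^{\mathcal{F}}_{(G,f)}(u,v)$ and $\varrho^{\mathcal{F}}_{(G,f)}(u,v)$ are the numbers of steady, resp. ranging, $\mathcal{F}$-sets at $(u,v)$. *)

theory Defs
  imports Complex_Main "HOL-Library.Extended_Real"
begin

datatype 'a gitem = Vx 'a | Ed "'a set"

definition simple_graph :: "'a set \<Rightarrow> 'a set set \<Rightarrow> bool" where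
  "simple_graph V E \<longleftrightarrow> finite V \<and> (\<forall>e\<in>E. \<exists>x y. x \<noteq> y \<and> x \<in> V \<and> y \<in> V \<and> e = {x, y})"

definition items :: "'a set \<Rightarrow> 'a set set \<Rightarrow> 'a gitem set" where
  "items V E = Vx ` V \<union> Ed ` E"

type_synonym 'a feature = "'a set \<Rightarrow> 'a set set \<Rightarrow> 'a gitem set \<Rightarrow> bool"

definition matching_feature :: "'a feature" where
  "matching_feature V E X \<longleftrightarrow> X \<subseteq> Ed ` E \<and>
     (\<forall>e1 e2. Ed e1 \<in> X \<longrightarrow> Ed e2 \<in> X \<longrightarrow> e1 \<noteq> e2 \<longrightarrow> e1 \<inter> e2 = {})"

definition maximal_feature :: "'a feature \<Rightarrow> 'a feature" where
  "maximal_feature F V E X \<longleftrightarrow> F V E X \<and>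
     \<not> (\<exists>Y. Y \<subseteq> items V E \<and> X \<subset> Y \<and> F V E Y)"

text \<open>Sublevel graph G_w for a level w in \<real> \<union> {+\<infinity>} (represented as ereal, w \<noteq> -\<infinity>).\<close>
definition sub_E :: "'a set set \<Rightarrow> ('a set \<Rightarrow> real) \<Rightarrow> ereal \<Rightarrow> 'a set set" where
  "sub_E E f w = (if w = \<infinity> then E else {e \<in> E. ereal (f e) \<le> w})"

definition sub_V :: "'a set \<Rightarrow> 'a set set \<Rightarrow> ('a set \<Rightarrow> real) \<Rightarrow> ereal \<Rightarrow> 'a set" where
  "sub_V V E f w = (if w = \<infinity> then V else \<Union> (sub_E E f w))"

definition is_F_set_at ::
  "'a feature \<Rightarrow> 'a set \<Rightarrow> 'a set set \<Rightarrow> ('a set \<Rightarrow> real) \<Rightarrow> ereal \<Rightarrow> 'a gitem set \<Rightarrow> bool" where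
  "is_F_set_at F V E f w X \<longleftrightarrow>
     X \<subseteq> items (sub_V V E f w) (sub_E E f w) \<and> F (sub_V V E f w) (sub_E E f w) X"

definition steady_F_set ::
  "'a feature \<Rightarrow> 'a set \<Rightarrow> 'a set set \<Rightarrow> ('a set \<Rightarrow> real) \<Rightarrow> real \<Rightarrow> ereal \<Rightarrow> 'a gitem set \<Rightarrow> bool" where
  "steady_F_set F V E f u v X \<longleftrightarrow> (\<forall>w. ereal u \<le> w \<and> w \<le> v \<longrightarrow> is_F_set_at F V E f w X)"

definition ranging_F_set ::
  "'a feature \<Rightarrow> 'a set \<Rightarrow> 'a set set \<Rightarrow> ('a set \<Rightarrow> real) \<Rightarrow> real \<Rightarrow> ereal \<Rightarrow> 'a gitem set \<Rightarrow> bool" where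
  "ranging_F_set F V E f u v X \<longleftrightarrow>
     (\<exists>w::real. w \<le> u \<and> is_F_set_at F V E f (ereal w) X) \<and>
     (\<exists>w'. v \<le> w' \<and> is_F_set_at F V E f w' X)"

definition steady_count ::
  "'a feature \<Rightarrow> 'a set \<Rightarrow> 'a set set \<Rightarrow> ('a set \<Rightarrow> real) \<Rightarrow> real \<Rightarrow> ereal \<Rightarrow> nat" where
  "steady_count F V E f u v = card {X. X \<subseteq> items V E \<and> steady_F_set F V E f u v X}"

definition ranging_count ::
  "'a feature \<Rightarrow> 'a set \<Rightarrow> 'a set set \<Rightarrow> ('a set \<Rightarrow> real) \<Rightarrow> real \<Rightarrow> ereal \<Rightarrow> nat" where
  "ranging_count F V E f u v = card {X. X \<subseteq> items V E \<and> ranging_F_set F V E f u v X}"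

end

theory Submission
  imports Defs
begin

text \<open>Whether X is a maximal matching of the sublevel graph G_w depends only on the edge set
  E_w, and it is a property of E_w that is convex under inclusion: if X is a maximal matching
  of E_1 and of E_3 with E_1 \<subseteq> E_2 \<subseteq> E_3, then every edge of E_2 outside X already
  meets X, since it lies in E_3. As w grows the edge sets E_w grow, so a maximal matching at two
  levels is one at every level in between; this makes ranging sets steady. If |f - g| \<le> h,
  then E^f_{u-h} \<subseteq> E^g_w \<subseteq> E^f_{v+h} for all w \<in> [u,v], which gives balancedness.\<close>

definition maximal_matching :: "'a set set \<Rightarrow> 'a gitem set \<Rightarrow> bool" where
  "maximal_matching E X \<longleftrightarrow> X \<subseteq> Ed ` E \<and>
     (\<forall>e1 e2. Ed e1 \<in> X \<longrightarrow> Ed e2 \<in> X \<longrightarrow> e1 \<noteq> e2 \<longrightarrow> e1 \<inter> e2 = {}) \<and>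
     (\<forall>e\<in>E. Ed e \<notin> X \<longrightarrow> (\<exists>e'. Ed e' \<in> X \<and> e \<inter> e' \<noteq> {}))"

lemma maximal_feature_matching_iff:
  "maximal_feature matching_feature V E X \<longleftrightarrow> maximal_matching E X"
proof
  assume "maximal_feature matching_feature V E X"
  then have matching: "matching_feature V E X"
    and no_larger: "\<And>Y. Y \<subseteq> items V E \<Longrightarrow> X \<subset> Y \<Longrightarrow> \<not> matching_feature V E Y"
    unfolding maximal_feature_def by auto
  have "\<exists>e'. Ed e' \<in> X \<and> e \<inter> e' \<noteq> {}" if "e \<in> E" "Ed e \<notin> X" for e
  proof (rule ccontr)
    assume "\<not> ?thesis"
    then have "matching_feature V E (insert (Ed e) X)"
      using matching that unfolding matching_feature_def by (auto simp: Int_commute)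
    moreover have "insert (Ed e) X \<subseteq> items V E"
      using matching that unfolding matching_feature_def items_def by auto
    ultimately show False
      using no_larger that(2) by blast
  qed
  with matching show "maximal_matching E X"
    unfolding maximal_matching_def matching_feature_def by simp
next
  assume max: "maximal_matching E X"
  have "\<not> matching_feature V E Y" if "X \<subset> Y" for Y
  proof
    assume Y: "matching_feature V E Y"
    obtain y where "y \<in> Y" "y \<notin> X"
      using \<open>X \<subset> Y\<close> by blast
    moreover have "Y \<subseteq> Ed ` E"
      using Y unfolding matching_feature_def by simp
    ultimately obtain e where e: "Ed e \<in> Y" "Ed e \<notin> X" "e \<in> E"
      by blast
    moreover have "\<forall>e\<in>E. Ed e \<notin> X \<longrightarrow> (\<exists>e'. Ed e' \<in> X \<and> e \<inter> e' \<noteq> {})"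
      using max unfolding maximal_matching_def by simp
    ultimately obtain e' where e': "Ed e' \<in> X" "e \<inter> e' \<noteq> {}"
      by blast
    then have "e \<noteq> e'" "Ed e' \<in> Y"
      using e \<open>X \<subset> Y\<close> by auto
    with e e' Y show False
      unfolding matching_feature_def by blast
  qed
  moreover have "matching_feature V E X"
    using max unfolding maximal_matching_def matching_feature_def by simp
  ultimately show "maximal_feature matching_feature V E X"
    unfolding maximal_feature_def by blast
qed

lemma is_F_set_at_maximal_matching_iff:
  "is_F_set_at (maximal_feature matching_feature) V E f w X \<longleftrightarrow> maximal_matching (sub_E E f w) X"
  unfolding is_F_set_at_def maximal_feature_matching_iff
  by (auto simp: maximal_matching_def items_def)

lemma maximal_matching_between:
  assumes "E1 \<subseteq> E2" "E2 \<subseteq> E3" "maximal_matching E1 X" "maximal_matching E3 X"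
  shows "maximal_matching E2 X"
proof -
  have "X \<subseteq> Ed ` E2"
    using assms(1,3) unfolding maximal_matching_def by (meson image_mono order_trans)
  moreover have "\<forall>e\<in>E2. Ed e \<notin> X \<longrightarrow> (\<exists>e'. Ed e' \<in> X \<and> e \<inter> e' \<noteq> {})"
    using assms(2,4) unfolding maximal_matching_def by (meson subsetD)
  ultimately show ?thesis
    using assms(3) unfolding maximal_matching_def by simp
qed

lemma sub_E_mono:
  assumes "w \<le> w'"
  shows "sub_E E f w \<subseteq> sub_E E f w'"
proof (cases "w' = \<infinity>")
  case False
  with assms have "w \<noteq> \<infinity>"
    by auto
  with False assms show ?thesis
    unfolding sub_E_def by (auto intro: order_trans)
qed (simp add: sub_E_def)

lemma sub_E_perturb:
  assumes "\<forall>e\<in>E. \<bar>f e - g e\<bar> \<le> h"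
  shows "sub_E E g w \<subseteq> sub_E E f (w + ereal h)"
proof (cases w)
  case (real s)
  have "f e \<le> s + h" if "e \<in> E" "g e \<le> s" for e
    using assms that by fastforce
  with real show ?thesis
    unfolding sub_E_def by auto
qed (auto simp: sub_E_def)

lemma finite_items:
  assumes "simple_graph V E"
  shows "finite (items V E)"
proof -
  have "finite V" "E \<subseteq> Pow V"
    using assms unfolding simple_graph_def by auto
  then show ?thesis
    unfolding items_def by (auto intro: finite_subset)
qed

lemma steady_imp_ranging:
  assumes "ereal u \<le> v" "steady_F_set F V E f u v X"
  shows "ranging_F_set F V E f u v X"
  using assms unfolding steady_F_set_def ranging_F_set_def by fastforce

lemma steady_maximal_matching_iff:
  "steady_F_set (maximal_feature matching_feature) V E f u v X \<longleftrightarrow>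
     (\<forall>w. ereal u \<le> w \<and> w \<le> v \<longrightarrow> maximal_matching (sub_E E f w) X)"
  unfolding steady_F_set_def is_F_set_at_maximal_matching_iff ..

lemma ranging_imp_steady_maximal_matching:
  assumes "ranging_F_set (maximal_feature matching_feature) V E f u v X"
  shows "steady_F_set (maximal_feature matching_feature) V E f u v X"
proof -
  obtain w w' where "w \<le> u" "maximal_matching (sub_E E f (ereal w)) X"
    and "v \<le> w'" "maximal_matching (sub_E E f w') X"
    using assms unfolding ranging_F_set_def is_F_set_at_maximal_matching_iff by blast
  then show ?thesis
    unfolding steady_maximal_matching_iff
    by (meson maximal_matching_between sub_E_mono ereal_less_eq(3) order_trans)
qed

lemma steady_maximal_matching_perturb:
  assumes close: "\<forall>e\<in>E. \<bar>f e - g e\<bar> \<le> h" and "0 \<le> h" "ereal u \<le> v"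
    and steady: "steady_F_set (maximal_feature matching_feature) V E f (u - h) (v + ereal h) X"
  shows "steady_F_set (maximal_feature matching_feature) V E g u v X"
  unfolding steady_maximal_matching_iff
proof (intro allI impI)
  fix w assume w: "ereal u \<le> w \<and> w \<le> v"
  have "ereal (u - h) \<le> ereal u"
    using \<open>0 \<le> h\<close> by simp
  also have "\<dots> \<le> v"
    by fact
  also have "\<dots> \<le> v + ereal h"
    using \<open>0 \<le> h\<close> by (simp add: add_increasing2)
  finally have "ereal (u - h) \<le> v + ereal h" .
  then have lower: "maximal_matching (sub_E E f (ereal (u - h))) X"
    and upper: "maximal_matching (sub_E E f (v + ereal h)) X"
    using steady unfolding steady_maximal_matching_iff by auto
  have "\<forall>e\<in>E. \<bar>g e - f e\<bar> \<le> h"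
    using close by (simp add: abs_minus_commute)
  then have "sub_E E f (ereal (u - h)) \<subseteq> sub_E E g (ereal u)"
    using sub_E_perturb[of E g f h "ereal (u - h)"] by simp
  also have "\<dots> \<subseteq> sub_E E g w"
    using w by (intro sub_E_mono) simp
  finally have below: "sub_E E f (ereal (u - h)) \<subseteq> sub_E E g w" .
  have "sub_E E g w \<subseteq> sub_E E f (w + ereal h)"
    using close by (rule sub_E_perturb)
  also have "\<dots> \<subseteq> sub_E E f (v + ereal h)"
    using w by (intro sub_E_mono add_right_mono) simp
  finally have above: "sub_E E g w \<subseteq> sub_E E f (v + ereal h)" .
  show "maximal_matching (sub_E E g w) X"
    using below above lower upper by (rule maximal_matching_between)
qed

theorem proposition5:
  shows "(\<forall>(V::'a set) E f u v. simple_graph V E \<longrightarrow> ereal u < v \<longrightarrow>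
            steady_count (maximal_feature matching_feature) V E f u v
          = ranging_count (maximal_feature matching_feature) V E f u v)
       \<and> (\<forall>(V::'a set) E f g (h::real) u v. simple_graph V E \<longrightarrow> h > 0 \<longrightarrow>
            (\<forall>e\<in>E. \<bar>f e - g e\<bar> \<le> h) \<longrightarrow> ereal u < v \<longrightarrow>
            steady_count (maximal_feature matching_feature) V E f (u - h) (v + ereal h)
          \<le> steady_count (maximal_feature matching_feature) V E g u v)"
proof (intro conjI allI impI)
  fix V :: "'a set" and E f u v
  assume "ereal u < v"
  then have "steady_F_set (maximal_feature matching_feature) V E f u v X \<longleftrightarrow>
      ranging_F_set (maximal_feature matching_feature) V E f u v X" for X
    using steady_imp_ranging ranging_imp_steady_maximal_matching less_imp_le by blast
  then show "steady_count (maximal_feature matching_feature) V E f u v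
           = ranging_count (maximal_feature matching_feature) V E f u v"
    unfolding steady_count_def ranging_count_def by simp
next
  fix V :: "'a set" and E f g and h :: real and u v
  assume "simple_graph V E" "h > 0" and close: "\<forall>e\<in>E. \<bar>f e - g e\<bar> \<le> h" and "ereal u < v"
  then have "{X. X \<subseteq> items V E \<and> steady_F_set (maximal_feature matching_feature) V E f (u - h) (v + ereal h) X}
      \<subseteq> {X. X \<subseteq> items V E \<and> steady_F_set (maximal_feature matching_feature) V E g u v X}"
    using steady_maximal_matching_perturb[OF close] by auto
  moreover have "finite {X. X \<subseteq> items V E \<and> steady_F_set (maximal_feature matching_feature) V E g u v X}"
    using finite_items[OF \<open>simple_graph V E\<close>] by simp
  ultimately show "steady_count (maximal_feature matching_feature) V E f (u - h) (v + ereal h)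
           \<le> steady_count (maximal_feature matching_feature) V E g u v"
    unfolding steady_count_def by (rule card_mono[rotated])
qed

end
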